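(* Let $\langle\{a,b\},C,d,O,v,\{<,<^{-1}\}\rangle$ be a two-player infinite sequential game where $O$ is finite, $<$ is a strict linear order on $O$, player $a$ has preference $<$ and player $b$ has preference $<^{-1}$. Let $\Gamma\subseteq\mathcal{P}(C^\omega)$ and assume: (1) for all $O'\subseteq O$ and $\gamma\in C^*$, $\{\alpha\in C^\omega\mid v(\gamma\alpha)\in O'\}\in\Gamma$; (2) the win-lose game $\langle C,D,W\rangle$ is determined for all $W\in\Gamma$ and $D\subseteq C^*$. Then the game has a subgame perfect equilibrium.
   Context: $C$ is a non-empty set of choices, $d:C^*\to\{a,b\}$ assigns the chooser after each history, $v:C^\omega\to O$. A strategy of $X$ is a function $s:d^{-1}(\{X\})\to C$; a profile is identified with $\sigma:C^*\to C$. For $\gamma\in C^*$, the play $p^\gamma(\sigma)$ is given by $p_n=\gamma_n$ for $n<|\gamma|$ and $p_n=\sigma(p_{<n})$ otherwise. $\sigma$ is a subgame perfect equilibrium if there are no $\gamma\in C^*$, player $X$ and strategy $s$ of $X$ with $v(p^\gamma(\sigma))\prec_X v(p^\gamma(\sigma_{X\mapsto s}))$, where $\prec_a={<}$, $\prec_b={<^{-1}}$ and $\sigma_{X\mapsto s}$ agrees with $s$ on $d^{-1}(\{X\})$ and with $\sigma$ elsewhere. The win-lose game $\langle C,D,W\rangle$ is the two-player game where the first player chooses after histories in $D$, the second after histories in $C^*\setminus D$, and the first player wins iff the play lies in $W$; it is determined if one player has a winning strategy. *)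

theory Defs
  imports Main
begin

datatype player = PA | PB

text \<open>Finite histories are lists over the choice type 'c; infinite plays are nat => 'c.
  The choice set C is the (nonempty) type 'c.\<close>

fun play_prefix :: "'c list \<Rightarrow> ('c list \<Rightarrow> 'c) \<Rightarrow> nat \<Rightarrow> 'c list" where
  "play_prefix \<gamma> \<sigma> 0 = []"
| "play_prefix \<gamma> \<sigma> (Suc n) =
     play_prefix \<gamma> \<sigma> n @ [if n < length \<gamma> then \<gamma> ! n else \<sigma> (play_prefix \<gamma> \<sigma> n)]"

definition play :: "'c list \<Rightarrow> ('c list \<Rightarrow> 'c) \<Rightarrow> nat \<Rightarrow> 'c" where
  "play \<gamma> \<sigma> n = (if n < length \<gamma> then \<gamma> ! n else \<sigma> (play_prefix \<gamma> \<sigma> n))"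

definition conc :: "'c list \<Rightarrow> (nat \<Rightarrow> 'c) \<Rightarrow> nat \<Rightarrow> 'c" where
  "conc \<gamma> \<alpha> n = (if n < length \<gamma> then \<gamma> ! n else \<alpha> (n - length \<gamma>))"

definition upd_profile :: "('c list \<Rightarrow> player) \<Rightarrow> ('c list \<Rightarrow> 'c) \<Rightarrow> player \<Rightarrow> ('c list \<Rightarrow> 'c) \<Rightarrow> 'c list \<Rightarrow> 'c" where
  "upd_profile d \<sigma> X s = (\<lambda>h. if d h = X then s h else \<sigma> h)"

fun prefers :: "player \<Rightarrow> 'o::linorder \<Rightarrow> 'o \<Rightarrow> bool" where
  "prefers PA x y = (x < y)"
| "prefers PB x y = (y < x)"

definition SPE :: "('c list \<Rightarrow> player) \<Rightarrow> ((nat \<Rightarrow> 'c) \<Rightarrow> 'o::linorder) \<Rightarrow> ('c list \<Rightarrow> 'c) \<Rightarrow> bool" where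
  "SPE d v \<sigma> \<longleftrightarrow> \<not> (\<exists>\<gamma> X s. prefers X (v (play \<gamma> \<sigma>)) (v (play \<gamma> (upd_profile d \<sigma> X s))))"

definition wl_play :: "'c list set \<Rightarrow> ('c list \<Rightarrow> 'c) \<Rightarrow> ('c list \<Rightarrow> 'c) \<Rightarrow> nat \<Rightarrow> 'c" where
  "wl_play D s1 s2 = play [] (\<lambda>h. if h \<in> D then s1 h else s2 h)"

definition wl_determined :: "'c list set \<Rightarrow> (nat \<Rightarrow> 'c) set \<Rightarrow> bool" where
  "wl_determined D W \<longleftrightarrow>
     (\<exists>s1. \<forall>s2. wl_play D s1 s2 \<in> W) \<or> (\<exists>s2. \<forall>s1. wl_play D s1 s2 \<notin> W)"

end

(*
  Let val h be the best outcome player a can secure from history h. Determinacy of the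
  threshold games "outcome >= x" shows that b can keep the outcome at most val h, so from
  every history each player has a strategy securing val h. These history-dependent strategies
  are glued into one strategy per player: play the strategy chosen at the anchor, the last
  history at which the value changed or the player deviated from that strategy. Along a play
  of the glued strategy the value never gets worse for the player and strictly improves at
  every change of anchor; as O is finite, the anchor eventually freezes, and the outcome is at
  least as good as the value at the start. The two glued strategies then form a subgame
  perfect equilibrium, because every deviation still meets a securing strategy of the opponent.
*)

theory Submission
  imports Defs
begin

definition prefix :: "nat \<Rightarrow> (nat \<Rightarrow> 'c) \<Rightarrow> 'c list" where
  "prefix n p = map p [0..<n]"

definition suffix :: "nat \<Rightarrow> (nat \<Rightarrow> 'c) \<Rightarrow> nat \<Rightarrow> 'c" where
  "suffix k p = (\<lambda>n. p (k + n))"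

lemma prefix_0 [simp]: "prefix 0 p = []"
  by (simp add: prefix_def)

lemma prefix_Suc [simp]: "prefix (Suc n) p = prefix n p @ [p n]"
  by (simp add: prefix_def)

lemma length_prefix [simp]: "length (prefix n p) = n"
  by (simp add: prefix_def)

lemma nth_prefix [simp]: "k < n \<Longrightarrow> prefix n p ! k = p k"
  by (simp add: prefix_def)

lemma take_prefix [simp]: "k \<le> n \<Longrightarrow> take k (prefix n p) = prefix k p"
  by (simp add: prefix_def take_map)

lemma prefix_add: "prefix (m + n) p = prefix m p @ prefix n (suffix m p)"
  by (induction n) (simp_all add: suffix_def)

lemma conc_prefix_suffix: "conc (prefix n p) (suffix n p) = p"
  by (rule ext) (simp add: conc_def suffix_def)

lemma play_prefix_eq_prefix: "play_prefix \<gamma> \<sigma> n = prefix n (play \<gamma> \<sigma>)"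
  by (induction n) (simp_all add: play_def)

lemma prefix_length_play: "prefix (length \<gamma>) (play \<gamma> \<sigma>) = \<gamma>"
  by (rule nth_equalityI) (simp_all add: play_def)

lemma play_beyond_history: "length \<gamma> \<le> n \<Longrightarrow> play \<gamma> \<sigma> n = \<sigma> (prefix n (play \<gamma> \<sigma>))"
  by (simp add: play_def play_prefix_eq_prefix)

lemma play_eqI:
  assumes "prefix (length \<gamma>) p = \<gamma>" and "\<And>n. length \<gamma> \<le> n \<Longrightarrow> p n = \<sigma> (prefix n p)"
  shows "p = play \<gamma> \<sigma>"
proof -
  have "prefix n p = prefix n (play \<gamma> \<sigma>)" for n
  proof (induction n)
    case (Suc n)
    have "p n = play \<gamma> \<sigma> n"
    proof (cases "n < length \<gamma>")
      case True
      then show ?thesis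
        using assms(1) prefix_length_play by (metis nth_prefix)
    next
      case False
      with assms(2)[of n] Suc show ?thesis
        by (simp add: play_beyond_history)
    qed
    with Suc show ?case by simp
  qed simp
  then show ?thesis
    by (metis ext lessI nth_prefix)
qed

lemma wl_play_eqI:
  assumes "\<And>n. prefix n \<alpha> \<in> D \<Longrightarrow> \<alpha> n = s1 (prefix n \<alpha>)"
    and "\<And>n. prefix n \<alpha> \<notin> D \<Longrightarrow> \<alpha> n = s2 (prefix n \<alpha>)"
  shows "\<alpha> = wl_play D s1 s2"
  unfolding wl_play_def by (rule play_eqI) (simp_all add: assms)

definition consistent ::
  "('c list \<Rightarrow> player) \<Rightarrow> player \<Rightarrow> ('c list \<Rightarrow> 'c) \<Rightarrow> 'c list \<Rightarrow> (nat \<Rightarrow> 'c) \<Rightarrow> bool" where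
  "consistent d X s \<gamma> p \<longleftrightarrow>
     prefix (length \<gamma>) p = \<gamma> \<and> (\<forall>n \<ge> length \<gamma>. d (prefix n p) = X \<longrightarrow> p n = s (prefix n p))"

definition secures ::
  "('c list \<Rightarrow> player) \<Rightarrow> ((nat \<Rightarrow> 'c) \<Rightarrow> 'o::linorder) \<Rightarrow> player \<Rightarrow> ('c list \<Rightarrow> 'c) \<Rightarrow> 'c list \<Rightarrow> 'o \<Rightarrow> bool"
  where "secures d v X s \<gamma> x \<longleftrightarrow> (\<forall>p. consistent d X s \<gamma> p \<longrightarrow> \<not> prefers X (v p) x)"

definition extends_following ::
  "('c list \<Rightarrow> player) \<Rightarrow> player \<Rightarrow> ('c list \<Rightarrow> 'c) \<Rightarrow> 'c list \<Rightarrow> 'c list \<Rightarrow> bool" where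
  "extends_following d X s h h' \<longleftrightarrow>
     take (length h) h' = h \<and> length h \<le> length h' \<and>
     (\<forall>k. length h \<le> k \<and> k < length h' \<and> d (take k h') = X \<longrightarrow> h' ! k = s (take k h'))"

lemma prefers_irrefl: "\<not> prefers X x x"
  by (cases X) simp_all

lemma prefers_trans: "prefers X x y \<Longrightarrow> prefers X y z \<Longrightarrow> prefers X x z"
  by (cases X) simp_all

lemma prefers_asym: "prefers X x y \<Longrightarrow> \<not> prefers X y x"
  by (cases X) simp_all

lemma not_prefers_trans: "\<not> prefers X x y \<Longrightarrow> \<not> prefers X y z \<Longrightarrow> \<not> prefers X x z"
  by (cases X) simp_all

lemma prefers_linear: "x \<noteq> y \<Longrightarrow> \<not> prefers X y x \<Longrightarrow> prefers X x y"
  by (cases X) auto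

lemma play_consistent: "(\<And>h. d h = X \<Longrightarrow> \<sigma> h = s h) \<Longrightarrow> consistent d X s \<gamma> (play \<gamma> \<sigma>)"
  unfolding consistent_def by (simp add: prefix_length_play play_beyond_history)

lemma consistent_common_play: "\<exists>p. consistent d PA s \<gamma> p \<and> consistent d PB t \<gamma> p"
  by (rule exI[of _ "play \<gamma> (\<lambda>h. if d h = PA then s h else t h)"]) (auto intro!: play_consistent)

lemma secured_values_ordered:
  assumes "secures d v PA s \<gamma> x" and "secures d v PB t \<gamma> y"
  shows "x \<le> y"
proof -
  obtain p where "consistent d PA s \<gamma> p" "consistent d PB t \<gamma> p"
    using consistent_common_play by blast
  with assms show ?thesis
    unfolding secures_def by (meson not_le order.trans prefers.simps)
qed

lemma extends_following_refl: "extends_following d X s h h"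
  by (auto simp: extends_following_def)

lemma extends_following_snoc:
  assumes "extends_following d X s h h'" and "d h' = X \<Longrightarrow> c = s h'"
  shows "extends_following d X s h (h' @ [c])"
  using assms unfolding extends_following_def
  by (auto simp: nth_append less_Suc_eq)

lemma consistent_restart:
  assumes "consistent d X s h' q" and "extends_following d X s h h'"
  shows "consistent d X s h q"
  unfolding consistent_def
proof (intro conjI allI impI)
  have "length h \<le> length h'" "take (length h) h' = h"
    using assms(2) unfolding extends_following_def by simp_all
  then show "prefix (length h) q = h"
    using assms(1) unfolding consistent_def by (metis take_prefix)
next
  fix k assume k: "length h \<le> k" "d (prefix k q) = X"
  show "q k = s (prefix k q)"
  proof (cases "k < length h'")
    case True
    then have "take k h' = prefix k q" "h' ! k = q k"
      using assms(1) unfolding consistent_def by (metis take_prefix less_imp_le, metis nth_prefix)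
    with True k assms(2) show ?thesis
      unfolding extends_following_def by metis
  next
    case False
    with k assms(1) show ?thesis
      unfolding consistent_def by simp
  qed
qed

lemma secures_extension:
  "secures d v X s h x \<Longrightarrow> extends_following d X s h h' \<Longrightarrow> secures d v X s h' x"
  unfolding secures_def using consistent_restart by blast

lemma consistentI_eventually:
  assumes "\<And>m. N \<le> m \<Longrightarrow> extends_following d X s h (prefix m p)"
  shows "consistent d X s h p"
  unfolding consistent_def
proof (intro conjI allI impI)
  let ?m = "max N (length h)"
  show "prefix (length h) p = h"
    using assms[of ?m] unfolding extends_following_def by simp
next
  fix k assume k: "length h \<le> k" "d (prefix k p) = X"
  let ?m = "max N (Suc k)"
  show "p k = s (prefix k p)"
    using assms[of ?m] k unfolding extends_following_def by simp
qed

section \<open>Determinacy of threshold games\<close>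

lemma consistent_shifted:
  assumes "consistent d X (\<lambda>h. s (drop (length \<gamma>) h)) \<gamma> p"
  shows "conc \<gamma> (suffix (length \<gamma>) p) = p"
    and "d (\<gamma> @ prefix n (suffix (length \<gamma>) p)) = X \<Longrightarrow>
           suffix (length \<gamma>) p n = s (prefix n (suffix (length \<gamma>) p))"
proof -
  have \<gamma>: "prefix (length \<gamma>) p = \<gamma>"
    using assms unfolding consistent_def by simp
  then show "conc \<gamma> (suffix (length \<gamma>) p) = p"
    using conc_prefix_suffix by metis
  have split: "prefix (length \<gamma> + n) p = \<gamma> @ prefix n (suffix (length \<gamma>) p)"
    using \<gamma> by (simp add: prefix_add)
  assume "d (\<gamma> @ prefix n (suffix (length \<gamma>) p)) = X"
  then have "p (length \<gamma> + n) = s (drop (length \<gamma>) (prefix (length \<gamma> + n) p))"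
    using assms split unfolding consistent_def by simp
  then show "suffix (length \<gamma>) p n = s (prefix n (suffix (length \<gamma>) p))"
    unfolding split by (simp add: suffix_def)
qed

lemma threshold_determined:
  assumes "\<forall>D. wl_determined D {\<alpha>. x \<le> v (conc \<gamma> \<alpha>)}"
  shows "(\<exists>s. secures d v PA s \<gamma> x) \<or> (\<exists>s. \<forall>p. consistent d PB s \<gamma> p \<longrightarrow> v p < x)"
proof -
  define D where "D = {h. d (\<gamma> @ h) = PA}"
  define W where "W = {\<alpha>. x \<le> v (conc \<gamma> \<alpha>)}"
  have "wl_determined D W"
    using assms unfolding W_def by blast
  then consider (first) s1 where "\<And>s2. wl_play D s1 s2 \<in> W"
    | (second) s2 where "\<And>s1. wl_play D s1 s2 \<notin> W"
    unfolding wl_determined_def by blast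
  then show ?thesis
  proof cases
    case first
    have "secures d v PA (\<lambda>h. s1 (drop (length \<gamma>) h)) \<gamma> x"
      unfolding secures_def
    proof (intro allI impI)
      fix p assume p: "consistent d PA (\<lambda>h. s1 (drop (length \<gamma>) h)) \<gamma> p"
      define \<alpha> where "\<alpha> = suffix (length \<gamma>) p"
      have "\<alpha> = wl_play D s1 (\<lambda>h. \<alpha> (length h))"
        by (rule wl_play_eqI) (use consistent_shifted(2)[OF p] in \<open>simp_all add: D_def \<alpha>_def\<close>)
      with first have "\<alpha> \<in> W" by metis
      then show "\<not> prefers PA (v p) x"
        using consistent_shifted(1)[OF p] by (simp add: W_def \<alpha>_def)
    qed
    then show ?thesis by blast
  next
    case second
    have "v p < x" if p: "consistent d PB (\<lambda>h. s2 (drop (length \<gamma>) h)) \<gamma> p" for p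
    proof -
      define \<alpha> where "\<alpha> = suffix (length \<gamma>) p"
      have "\<alpha> n = s2 (prefix n \<alpha>)" if "prefix n \<alpha> \<notin> D" for n
        using that consistent_shifted(2)[OF p, of n]
        by (cases "d (\<gamma> @ prefix n \<alpha>)") (simp_all add: D_def \<alpha>_def)
      then have "\<alpha> = wl_play D (\<lambda>h. \<alpha> (length h)) s2"
        by (intro wl_play_eqI) simp_all
      with second have "\<alpha> \<notin> W" by metis
      then show "v p < x"
        using consistent_shifted(1)[OF p] by (simp add: W_def \<alpha>_def)
    qed
    then show ?thesis by blast
  qed
qed

section \<open>Gluing securing strategies\<close>

lemma eventually_const_if_ascending:
  fixes f :: "'a \<Rightarrow> 'o" and r :: "'o \<Rightarrow> 'o \<Rightarrow> bool"
  assumes "finite (UNIV :: 'o set)" and "transp r" and "irreflp r"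
    and ascending: "\<And>n. n0 \<le> n \<Longrightarrow> g (Suc n) = g n \<or> r (f (g n)) (f (g (Suc n)))"
  shows "\<exists>N \<ge> n0. \<forall>m \<ge> N. g m = g N"
proof -
  define \<mu> where "\<mu> n = card {y. r (f (g n)) y}" for n
  have drop: "\<mu> (Suc n) < \<mu> n" if "n0 \<le> n" "g (Suc n) \<noteq> g n" for n
    unfolding \<mu>_def
  proof (rule psubset_card_mono)
    show "finite {y. r (f (g n)) y}"
      using assms(1) by (rule finite_subset[rotated]) simp
    have "r (f (g n)) (f (g (Suc n)))"
      using ascending that by blast
    then show "{y. r (f (g (Suc n))) y} \<subset> {y. r (f (g n)) y}"
      using assms(2,3) by (auto dest: transpD irreflpD)
  qed
  then have mono: "\<mu> (Suc n) \<le> \<mu> n" if "n0 \<le> n" for n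
    using drop[OF that] by (cases "g (Suc n) = g n") (simp_all add: \<mu>_def)
  obtain N where N: "n0 \<le> N" and least: "\<And>m. n0 \<le> m \<Longrightarrow> \<mu> N \<le> \<mu> m"
    using ex_has_least_nat[of "\<lambda>m. n0 \<le> m" n0 \<mu>] by blast
  have "\<mu> m \<le> \<mu> N" if "N \<le> m" for m
    using that by (induction m rule: dec_induct) (use mono N in \<open>auto intro: order.trans\<close>)
  then have stable: "g (Suc m) = g m" if "N \<le> m" for m
    using that drop[of m] least[of "Suc m"] N by fastforce
  have "g m = g N" if "N \<le> m" for m
    using that by (induction m rule: dec_induct) (simp_all add: stable)
  with N show ?thesis by blast
qed

locale securing_strategies =
  fixes d :: "'c list \<Rightarrow> player" and v :: "(nat \<Rightarrow> 'c) \<Rightarrow> 'o::linorder" and X :: player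
    and val :: "'c list \<Rightarrow> 'o" and S :: "'c list \<Rightarrow> 'c list \<Rightarrow> 'c"
  assumes finite_outcomes: "finite (UNIV :: 'o set)"
    and S_secures_val: "\<And>\<gamma>. secures d v X (S \<gamma>) \<gamma> (val \<gamma>)"
    and val_maximal: "\<And>\<gamma> s x. secures d v X s \<gamma> x \<Longrightarrow> \<not> prefers X (val \<gamma>) x"
begin

primrec anchor_rev :: "'c list \<Rightarrow> 'c list" where
  "anchor_rev [] = []"
| "anchor_rev (c # r) = (let h = rev r; g = anchor_rev r in
     if val (h @ [c]) \<noteq> val g \<or> (d h = X \<and> c \<noteq> S g h) then h @ [c] else g)"

definition anchor :: "'c list \<Rightarrow> 'c list" where
  "anchor h = anchor_rev (rev h)"

definition glued :: "'c list \<Rightarrow> 'c" where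
  "glued h = S (anchor h) h"

lemma anchor_Nil [simp]: "anchor [] = []"
  by (simp add: anchor_def)

lemma anchor_snoc: "anchor (h @ [c]) =
    (if val (h @ [c]) \<noteq> val (anchor h) \<or> (d h = X \<and> c \<noteq> S (anchor h) h) then h @ [c] else anchor h)"
  by (simp add: anchor_def Let_def)

lemma val_anchor: "val (anchor h) = val h"
  by (induction h rule: rev_induct) (auto simp: anchor_snoc)

lemma anchor_extends_following: "extends_following d X (S (anchor h)) (anchor h) h"
proof (induction h rule: rev_induct)
  case (snoc c h)
  then show ?case
    by (auto simp: anchor_snoc extends_following_refl intro: extends_following_snoc)
qed (simp add: extends_following_refl)

lemma anchor_step:
  assumes p: "consistent d X glued \<gamma> p" and n: "length \<gamma> \<le> n"
  defines "g \<equiv> anchor (prefix n p)"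
  shows "anchor (prefix (Suc n) p) = g \<or> prefers X (val g) (val (anchor (prefix (Suc n) p)))"
proof (cases "anchor (prefix (Suc n) p) = g")
  case False
  have follows: "d (prefix n p) = X \<Longrightarrow> p n = S g (prefix n p)"
    using p n unfolding consistent_def glued_def g_def by simp
  with False have new: "anchor (prefix (Suc n) p) = prefix (Suc n) p"
    and changed: "val (prefix (Suc n) p) \<noteq> val g"
    unfolding g_def by (auto simp: anchor_snoc split: if_splits)
  have "extends_following d X (S g) g (prefix (Suc n) p)"
    unfolding prefix_Suc g_def
    by (rule extends_following_snoc[OF anchor_extends_following]) (use follows g_def in simp)
  then have "secures d v X (S g) (prefix (Suc n) p) (val g)"
    by (rule secures_extension[OF S_secures_val])
  then have "\<not> prefers X (val (prefix (Suc n) p)) (val g)"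
    by (rule val_maximal)
  with changed new show ?thesis
    by (metis prefers_linear)
qed simp

lemma glued_secures_val: "secures d v X glued \<gamma> (val \<gamma>)"
  unfolding secures_def
proof (intro allI impI)
  fix p assume p: "consistent d X glued \<gamma> p"
  define A where "A n = anchor (prefix n p)" for n
  have ascending: "A (Suc n) = A n \<or> prefers X (val (A n)) (val (A (Suc n)))" if "length \<gamma> \<le> n" for n
    using anchor_step[OF p that] unfolding A_def by blast
  have "transp (prefers X)" "irreflp (prefers X)"
    by (auto intro!: transpI irreflpI intro: prefers_trans simp: prefers_irrefl)
  then have "\<exists>N \<ge> length \<gamma>. \<forall>m \<ge> N. A m = A N"
    using ascending by (intro eventually_const_if_ascending[where f = val] finite_outcomes)
  then obtain N where N: "length \<gamma> \<le> N" and const: "\<And>m. N \<le> m \<Longrightarrow> A m = A N"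
    by blast
  have "extends_following d X (S (A N)) (A N) (prefix m p)" if "N \<le> m" for m
    using anchor_extends_following[of "prefix m p"] const[OF that] unfolding A_def by simp
  then have "consistent d X (S (A N)) (A N) p"
    by (rule consistentI_eventually)
  then have "\<not> prefers X (v p) (val (A N))"
    using S_secures_val unfolding secures_def by blast
  moreover have "\<not> prefers X (val (A m)) (val \<gamma>)" if "length \<gamma> \<le> m" for m
    using that
  proof (induction m rule: dec_induct)
    case base
    have "prefix (length \<gamma>) p = \<gamma>"
      using p unfolding consistent_def by simp
    then show ?case
      by (simp add: A_def val_anchor prefers_irrefl)
  next
    case (step m)
    then show ?case
      using ascending[of m] by (metis prefers_asym not_prefers_trans)
  qed
  ultimately show "\<not> prefers X (v p) (val \<gamma>)"
    using N by (metis not_prefers_trans)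
qed

end

lemma uniform_securing_strategy:
  fixes val :: "'c list \<Rightarrow> 'o::linorder"
  assumes "finite (UNIV :: 'o set)"
    and "\<And>\<gamma>. \<exists>s. secures d v X s \<gamma> (val \<gamma>)"
    and "\<And>\<gamma> s x. secures d v X s \<gamma> x \<Longrightarrow> \<not> prefers X (val \<gamma>) x"
  shows "\<exists>f. \<forall>\<gamma>. secures d v X f \<gamma> (val \<gamma>)"
proof -
  obtain S where "\<And>\<gamma>. secures d v X (S \<gamma>) \<gamma> (val \<gamma>)"
    using assms(2) by metis
  then interpret securing_strategies d v X val S
    using assms(1,3) by unfold_locales
  show ?thesis
    using glued_secures_val by blast
qed

section \<open>The value of the game\<close>

definition game_value :: "('c list \<Rightarrow> player) \<Rightarrow> ((nat \<Rightarrow> 'c) \<Rightarrow> 'o::linorder) \<Rightarrow> 'c list \<Rightarrow> 'o" where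
  "game_value d v \<gamma> = Max {x. \<exists>s. secures d v PA s \<gamma> x}"

lemma
  fixes v :: "(nat \<Rightarrow> 'c) \<Rightarrow> 'o::linorder"
  assumes "finite (UNIV :: 'o set)"
  shows game_value_secured: "\<exists>s. secures d v PA s \<gamma> (game_value d v \<gamma>)"
    and game_value_maximal: "secures d v PA s \<gamma> x \<Longrightarrow> x \<le> game_value d v \<gamma>"
proof -
  let ?G = "{x. \<exists>s. secures d v PA s \<gamma> x}"
  have "finite ?G"
    using assms by (rule finite_subset[rotated]) simp
  moreover have "Min UNIV \<in> ?G"
    using assms by (simp add: secures_def not_less)
  ultimately have "game_value d v \<gamma> \<in> ?G"
    unfolding game_value_def by (intro Max_in) auto
  then show "\<exists>s. secures d v PA s \<gamma> (game_value d v \<gamma>)"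
    by simp
  show "secures d v PA s \<gamma> x \<Longrightarrow> x \<le> game_value d v \<gamma>"
    unfolding game_value_def using \<open>finite ?G\<close> by (intro Max_ge) auto
qed

lemma game_value_secured_PB:
  fixes v :: "(nat \<Rightarrow> 'c) \<Rightarrow> 'o::linorder"
  assumes fin: "finite (UNIV :: 'o set)"
    and det: "\<And>x. \<forall>D. wl_determined D {\<alpha>. x \<le> v (conc \<gamma> \<alpha>)}"
  shows "\<exists>t. secures d v PB t \<gamma> (game_value d v \<gamma>)"
proof (cases "\<exists>x. game_value d v \<gamma> < x")
  case True
  let ?above = "{x. game_value d v \<gamma> < x}"
  define succ where "succ = Min ?above"
  have "finite ?above"
    using fin by (rule finite_subset[rotated]) simp
  with True have succ: "game_value d v \<gamma> < succ" "\<And>x. game_value d v \<gamma> < x \<Longrightarrow> succ \<le> x"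
    unfolding succ_def using Min_in Min_le by auto
  \<comment> \<open>a cannot secure the successor of the value, so b keeps the outcome below it\<close>
  then have "\<not> (\<exists>s. secures d v PA s \<gamma> succ)"
    using game_value_maximal[OF fin] by (meson not_le)
  then obtain t where "\<And>p. consistent d PB t \<gamma> p \<Longrightarrow> v p < succ"
    using threshold_determined[OF det] by blast
  with succ(2) have "secures d v PB t \<gamma> (game_value d v \<gamma>)"
    unfolding secures_def by (meson leD prefers.simps(2))
  then show ?thesis by blast
qed (auto simp: secures_def not_less)

lemma SPE_if_subgame_optimal:
  assumes sA: "\<And>\<gamma>. secures d v PA sA \<gamma> (val \<gamma>)" and sB: "\<And>\<gamma>. secures d v PB sB \<gamma> (val \<gamma>)"
  shows "SPE d v (\<lambda>h. if d h = PA then sA h else sB h)" (is "SPE d v ?\<sigma>")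
  unfolding SPE_def
proof clarify
  fix \<gamma> X s
  assume deviation: "prefers X (v (play \<gamma> ?\<sigma>)) (v (play \<gamma> (upd_profile d ?\<sigma> X s)))"
  have "consistent d PA sA \<gamma> (play \<gamma> ?\<sigma>)" "consistent d PB sB \<gamma> (play \<gamma> ?\<sigma>)"
    by (auto intro: play_consistent)
  then have "\<not> v (play \<gamma> ?\<sigma>) < val \<gamma>" "\<not> val \<gamma> < v (play \<gamma> ?\<sigma>)"
    using sA sB unfolding secures_def by auto
  then have outcome: "v (play \<gamma> ?\<sigma>) = val \<gamma>"
    by (meson antisym_conv3)
  show False
  proof (cases X)
    case PA
    then have "consistent d PB sB \<gamma> (play \<gamma> (upd_profile d ?\<sigma> X s))"
      by (auto intro: play_consistent simp: upd_profile_def)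
    with sB deviation outcome PA show False
      unfolding secures_def by fastforce
  next
    case PB
    then have "consistent d PA sA \<gamma> (play \<gamma> (upd_profile d ?\<sigma> X s))"
      by (auto intro: play_consistent simp: upd_profile_def)
    with sA deviation outcome PB show False
      unfolding secures_def by fastforce
  qed
qed

theorem theorem24:
  fixes d :: "'c list \<Rightarrow> player"
    and v :: "(nat \<Rightarrow> 'c) \<Rightarrow> 'o::linorder"
    and \<Gamma> :: "(nat \<Rightarrow> 'c) set set"
  assumes "finite (UNIV :: 'o set)"
    and "\<forall>O' :: 'o set. \<forall>\<gamma>. {\<alpha>. v (conc \<gamma> \<alpha>) \<in> O'} \<in> \<Gamma>"
    and "\<forall>W \<in> \<Gamma>. \<forall>D. wl_determined D W"
  shows "\<exists>\<sigma>. SPE d v \<sigma>"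
proof -
  note fin = assms(1)
  have det: "\<forall>D. wl_determined D {\<alpha>. x \<le> v (conc \<gamma> \<alpha>)}" for \<gamma> x
  proof -
    have "{\<alpha>. v (conc \<gamma> \<alpha>) \<in> {y. x \<le> y}} \<in> \<Gamma>"
      using assms(2) by blast
    with assms(3) show ?thesis by simp
  qed
  have "\<exists>sA. \<forall>\<gamma>. secures d v PA sA \<gamma> (game_value d v \<gamma>)"
    by (rule uniform_securing_strategy[OF fin])
      (use game_value_secured[OF fin] game_value_maximal[OF fin] in \<open>auto simp: not_less\<close>)
  moreover have "\<exists>sB. \<forall>\<gamma>. secures d v PB sB \<gamma> (game_value d v \<gamma>)"
  proof (rule uniform_securing_strategy[OF fin])
    show "\<exists>t. secures d v PB t \<gamma> (game_value d v \<gamma>)" for \<gamma>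
      using game_value_secured_PB[OF fin det] .
    show "\<not> prefers PB (game_value d v \<gamma>) x" if "secures d v PB t \<gamma> x" for \<gamma> t x
      using game_value_secured[OF fin] secured_values_ordered that by (fastforce simp: not_less)
  qed
  ultimately show ?thesis
    using SPE_if_subgame_optimal by blast
qed

end
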